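(* Let $Y$ be a random vector in $\mathbb{R}^n$ (not necessarily Gaussian) with $\mathbb{E}[Y]=\theta$ and $\mathrm{Cov}(Y)=\sigma^2 I_n$, and let $g(y)=Sy$ for a fixed matrix $S\in\mathbb{R}^{n\times n}$. For any $\alpha>0$ and $B\ge1$, with the CB estimator constructed from $\omega^b\sim N(0,\sigma^2I_n)$ i.i.d. independent of $Y$, one has $\mathbb{E}[\mathrm{CB}_\alpha(g)]=\mathbb{E}\|\theta-SZ\|_2^2$, where $Z\sim N(\theta,(1+\alpha)\sigma^2 I_n)$.
   Context: CB construction: draw $\omega^1,\dots,\omega^B$ i.i.d. $N(0,\sigma^2 I_n)$ independent of $Y$, set $Y^{*b}=Y+\sqrt{\alpha}\,\omega^b$, $Y^{\dagger b}=Y-\omega^b/\sqrt{\alpha}$, and $$\mathrm{CB}_\alpha(g)=\frac1B\sum_{b=1}^B\Big(\|Y^{\dagger b}-g(Y^{*b})\|_2^2-\|\omega^b\|_2^2/\alpha\Big)-n\sigma^2 .$$ *)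

theory Defs
  imports "HOL-Probability.Probability"
begin

definition gauss_vec :: "real^'n \<Rightarrow> real \<Rightarrow> (real^'n) measure" where
  "gauss_vec mu s2 = density lborel
     (\<lambda>x. ennreal (\<Prod>i\<in>UNIV. normal_density (mu $ i) (sqrt s2) (x $ i)))"

text \<open>The CB estimator for the linear rule g(y) = S y, evaluated pointwise
  at the observed Y = y and the noise draws w 0, ..., w (B-1).\<close>
definition CB :: "real \<Rightarrow> nat \<Rightarrow> real \<Rightarrow> real^'n^'n \<Rightarrow> real^'n \<Rightarrow> (nat \<Rightarrow> real^'n) \<Rightarrow> real" where
  "CB \<alpha> B \<sigma> S y w =
     (1 / real B) * (\<Sum>b<B.
        (norm ((y - (1 / sqrt \<alpha>) *\<^sub>R w b) - S *v (y + sqrt \<alpha> *\<^sub>R w b)))\<^sup>2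
        - (norm (w b))\<^sup>2 / \<alpha>)
     - real CARD('n) * \<sigma>\<^sup>2"

end

theory Submission
  imports Defs
begin

text \<open>Only the first two moments enter. With \<open>A = I - S\<close> and
  \<open>C = I / sqrt \<alpha> + sqrt \<alpha> S\<close>, each summand of the CB estimator is
  \<open>\<parallel>A Y - C \<omega>\<parallel>\<^sup>2 - \<parallel>\<omega>\<parallel>\<^sup>2 / \<alpha>\<close>. The cross term has mean zero by independence and
  \<open>E \<omega> = 0\<close>, and a random vector \<open>X\<close> with mean \<open>m\<close> and covariance \<open>s2 I\<close> satisfies
  \<open>E \<parallel>c - L X\<parallel>\<^sup>2 = \<parallel>c - L m\<parallel>\<^sup>2 + s2 \<parallel>L\<parallel>\<^sub>F\<^sup>2\<close>. The weighted parallelogram law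
  \<open>\<parallel>I - S\<parallel>\<^sub>F\<^sup>2 + \<parallel>C\<parallel>\<^sub>F\<^sup>2 = (1 + 1/\<alpha>) n + (1 + \<alpha>) \<parallel>S\<parallel>\<^sub>F\<^sup>2\<close> turns the mean of every
  summand into \<open>\<parallel>\<theta> - S \<theta>\<parallel>\<^sup>2 + (1 + \<alpha>) \<sigma>\<^sup>2 \<parallel>S\<parallel>\<^sub>F\<^sup>2 + n \<sigma>\<^sup>2\<close>; by the same moment
  formula this equals \<open>E \<parallel>\<theta> - S Z\<parallel>\<^sup>2 + n \<sigma>\<^sup>2\<close> for \<open>Z \<sim> N(\<theta>, (1 + \<alpha>) \<sigma>\<^sup>2 I)\<close>,
  whose Gaussian moments are computed coordinatewise from the product density.\<close>

lemma power2_norm_matrix: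
  fixes L :: "real^'m^'n"
  shows "(norm L)\<^sup>2 = (\<Sum>i\<in>UNIV. \<Sum>j\<in>UNIV. (L $ i $ j)\<^sup>2)"
  unfolding power2_norm_eq_inner inner_vec_def by (simp add: power2_eq_square)

lemma power2_norm_mat_1: "(norm (mat 1 :: real^'n^'n))\<^sup>2 = real CARD('n)"
proof -
  have "((mat 1 :: real^'n^'n) $ i $ j)\<^sup>2 = (if i = j then 1 else 0)" for i j
    by (simp add: mat_def)
  then show ?thesis
    by (simp add: power2_norm_matrix)
qed

lemma weighted_parallelogram_law:
  fixes a b :: "'a::real_inner"
  assumes "\<alpha> > 0"
  shows "(norm (a - b))\<^sup>2 + (norm ((1 / sqrt \<alpha>) *\<^sub>R a + sqrt \<alpha> *\<^sub>R b))\<^sup>2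
         = (1 + 1 / \<alpha>) * (norm a)\<^sup>2 + (1 + \<alpha>) * (norm b)\<^sup>2"
proof -
  have "sqrt \<alpha> * sqrt \<alpha> = \<alpha>" using assms by simp
  then show ?thesis
    using assms by (simp add: power2_norm_eq_inner inner_diff inner_add inner_commute field_simps)
qed

lemma CB_summand_decomposition:
  fixes S :: "real^'n^'n"
  shows "(y - (1 / sqrt \<alpha>) *\<^sub>R w) - S *v (y + sqrt \<alpha> *\<^sub>R w)
       = (mat 1 - S) *v y - ((1 / sqrt \<alpha>) *\<^sub>R mat 1 + sqrt \<alpha> *\<^sub>R S) *v w"
  by (simp add: algebra_simps scaleR_matrix_vector_assoc[symmetric])

lemma integrable_vec_nth_iff:
  fixes X :: "'a \<Rightarrow> real^'n"
  shows "integrable M X \<longleftrightarrow> (\<forall>i. integrable M (\<lambda>x. X x $ i))"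
proof
  assume "integrable M X"
  then show "\<forall>i. integrable M (\<lambda>x. X x $ i)"
    using integrable_bounded_linear[OF bounded_linear_vec_nth] by blast
next
  assume "\<forall>i. integrable M (\<lambda>x. X x $ i)"
  then have "integrable M (\<lambda>x. \<Sum>i\<in>UNIV. X x $ i *\<^sub>R (axis i 1 :: real^'n))"
    by auto
  moreover have "(\<lambda>x. \<Sum>i\<in>UNIV. X x $ i *\<^sub>R axis i 1) = X"
    by (simp add: fun_eq_iff scalar_mult_eq_scaleR[symmetric] basis_expansion)
  ultimately show "integrable M X"
    by (simp only:)
qed

lemma integral_vec_nth:
  fixes X :: "'a \<Rightarrow> real^'n"
  assumes "integrable M X"
  shows "(\<integral>x. X x $ i \<partial>M) = (\<integral>x. X x \<partial>M) $ i"
  using integral_bounded_linear[OF bounded_linear_vec_nth assms] .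

definition isotropic_moments :: "'a measure \<Rightarrow> ('a \<Rightarrow> real^'n) \<Rightarrow> real^'n \<Rightarrow> real \<Rightarrow> bool" where
  "isotropic_moments M X m s2 \<longleftrightarrow> integrable M X \<and> (\<integral>x. X x \<partial>M) = m \<and>
     (\<forall>i j. integrable M (\<lambda>x. (X x $ i - m $ i) * (X x $ j - m $ j)) \<and>
            (\<integral>x. (X x $ i - m $ i) * (X x $ j - m $ j) \<partial>M) = (if i = j then s2 else 0))"

lemma isotropic_moments_distr:
  fixes X :: "'a \<Rightarrow> real^'n"
  assumes "X \<in> borel_measurable M" "isotropic_moments (distr M lborel X) (\<lambda>x. x) m s2"
  shows "isotropic_moments M X m s2"
proof -
  have X_meas: "X \<in> measurable M lborel"
    using assms(1) by simp
  show ?thesis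
    using assms(2)
    by (simp add: isotropic_moments_def integrable_distr_eq[OF X_meas] integral_distr[OF X_meas])
qed

lemma (in prob_space) expectation_power2_norm_centered:
  fixes X :: "'a \<Rightarrow> real^'n" and L :: "real^'n^'m"
  assumes "isotropic_moments M X m s2"
  shows "integrable M (\<lambda>x. (norm (L *v (X x - m)))\<^sup>2)"
    and "expectation (\<lambda>x. (norm (L *v (X x - m)))\<^sup>2) = s2 * (norm L)\<^sup>2"
proof -
  define D where "D j x = X x $ j - m $ j" for j x
  have D_int: "integrable M (\<lambda>x. D j x * D k x)"
    and D_cov: "expectation (\<lambda>x. D j x * D k x) = (if j = k then s2 else 0)" for j k
    using assms by (simp_all add: isotropic_moments_def D_def)
  have expand: "(norm (L *v (X x - m)))\<^sup>2
      = (\<Sum>i\<in>UNIV. \<Sum>j\<in>UNIV. \<Sum>k\<in>UNIV. L $ i $ j * L $ i $ k * (D j x * D k x))" for x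
    by (simp add: power2_norm_eq_inner inner_vec_def matrix_vector_mult_def D_def
        sum_product algebra_simps)
  show "integrable M (\<lambda>x. (norm (L *v (X x - m)))\<^sup>2)"
    unfolding expand using D_int by auto
  have "expectation (\<lambda>x. (norm (L *v (X x - m)))\<^sup>2)
      = (\<Sum>i\<in>UNIV. \<Sum>j\<in>UNIV. \<Sum>k\<in>UNIV. L $ i $ j * L $ i $ k * (if j = k then s2 else 0))"
    unfolding expand using D_int by (simp add: Bochner_Integration.integral_sum D_cov)
  also have "\<dots> = s2 * (norm L)\<^sup>2"
    unfolding power2_norm_matrix
    by (simp add: if_distrib power2_eq_square sum_distrib_left algebra_simps cong: if_cong)
  finally show "expectation (\<lambda>x. (norm (L *v (X x - m)))\<^sup>2) = s2 * (norm L)\<^sup>2" .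
qed

lemma (in prob_space) expectation_power2_norm_affine:
  fixes X :: "'a \<Rightarrow> real^'n" and L :: "real^'n^'m"
  assumes X: "isotropic_moments M X m s2"
  shows "integrable M (\<lambda>x. (norm (c - L *v X x))\<^sup>2)"
    and "expectation (\<lambda>x. (norm (c - L *v X x))\<^sup>2) = (norm (c - L *v m))\<^sup>2 + s2 * (norm L)\<^sup>2"
proof -
  let ?a = "c - L *v m" and ?D = "\<lambda>x. L *v (X x - m)"
  have X_int: "integrable M X" and X_mean: "expectation X = m"
    using X by (simp_all add: isotropic_moments_def)
  have D_int: "integrable M ?D"
    using X_int by (intro integrable_bounded_linear[OF matrix_vector_mul_bounded_linear]) auto
  have D_mean: "expectation ?D = 0"
    using X_int X_mean prob_space
    by (simp add: integral_bounded_linear[OF matrix_vector_mul_bounded_linear])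
  have expand: "(norm (c - L *v X x))\<^sup>2 = (norm ?a)\<^sup>2 - 2 * (?a \<bullet> ?D x) + (norm (?D x))\<^sup>2" for x
    by (simp add: power2_norm_eq_inner algebra_simps inner_commute)
  note D_sq = expectation_power2_norm_centered[OF X, of L]
  show "integrable M (\<lambda>x. (norm (c - L *v X x))\<^sup>2)"
    unfolding expand using D_int D_sq(1) by auto
  show "expectation (\<lambda>x. (norm (c - L *v X x))\<^sup>2) = (norm ?a)\<^sup>2 + s2 * (norm L)\<^sup>2"
    unfolding expand using D_int D_sq D_mean by (simp add: prob_space)
qed

lemma (in prob_space) indep_var_integral_inner:
  fixes X W :: "'a \<Rightarrow> real^'n"
  assumes indep: "indep_var borel X borel W" and "integrable M X" "integrable M W"
  shows "integrable M (\<lambda>x. X x \<bullet> W x)"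
    and "expectation (\<lambda>x. X x \<bullet> W x) = expectation X \<bullet> expectation W"
proof -
  have indep_nth: "indep_var borel (\<lambda>x. X x $ i) borel (\<lambda>x. W x $ i)" for i
    using indep_var_compose[OF indep, of "\<lambda>v. v $ i" borel "\<lambda>v. v $ i" borel]
    by (simp add: comp_def)
  have nth_int: "integrable M (\<lambda>x. X x $ i)" "integrable M (\<lambda>x. W x $ i)" for i
    using assms(2,3) by (simp_all add: integrable_vec_nth_iff)
  have inner_eq: "X x \<bullet> W x = (\<Sum>i\<in>UNIV. X x $ i * W x $ i)" for x
    by (simp add: inner_vec_def)
  show "integrable M (\<lambda>x. X x \<bullet> W x)"
    unfolding inner_eq using indep_var_integrable[OF indep_nth nth_int] by auto
  show "expectation (\<lambda>x. X x \<bullet> W x) = expectation X \<bullet> expectation W"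
    unfolding inner_eq
    using indep_var_integrable[OF indep_nth nth_int] indep_var_lebesgue_integral[OF indep_nth nth_int]
    by (simp add: Bochner_Integration.integral_sum inner_vec_def integral_vec_nth assms(2,3))
qed

lemma (in prob_space) indep_var_of_indep_vars:
  assumes "indep_vars (\<lambda>_. N) X I" "i \<in> I" "j \<in> I" "i \<noteq> j"
  shows "indep_var N (X i) N (X j)"
proof -
  have "indep_var (PiM {i} (\<lambda>_. N)) (\<lambda>x. restrict (\<lambda>k. X k x) {i})
                  (PiM {j} (\<lambda>_. N)) (\<lambda>x. restrict (\<lambda>k. X k x) {j})"
    using assms by (intro indep_var_restrict) auto
  then have "indep_var N ((\<lambda>f. f i) \<circ> (\<lambda>x. restrict (\<lambda>k. X k x) {i}))
                       N ((\<lambda>f. f j) \<circ> (\<lambda>x. restrict (\<lambda>k. X k x) {j}))"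
    by (rule indep_var_compose) (auto intro: measurable_component_singleton)
  then show ?thesis
    by (simp add: comp_def)
qed

lemma (in prob_space) expectation_CB_summand:
  fixes Y W :: "'a \<Rightarrow> real^'n" and S :: "real^'n^'n"
  assumes Y: "isotropic_moments M Y \<theta> s2" and W: "isotropic_moments M W 0 s2"
    and indep: "indep_var borel Y borel W" and "\<alpha> > 0"
  defines "T \<equiv> \<lambda>x. (norm ((Y x - (1 / sqrt \<alpha>) *\<^sub>R W x) - S *v (Y x + sqrt \<alpha> *\<^sub>R W x)))\<^sup>2
                   - (norm (W x))\<^sup>2 / \<alpha>"
  shows "integrable M T"
    and "expectation T = (norm (\<theta> - S *v \<theta>))\<^sup>2 + (1 + \<alpha>) * s2 * (norm S)\<^sup>2 + real CARD('n) * s2"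
proof -
  define A :: "real^'n^'n" where "A = mat 1 - S"
  define C :: "real^'n^'n" where "C = (1 / sqrt \<alpha>) *\<^sub>R mat 1 + sqrt \<alpha> *\<^sub>R S"
  have T_split: "T x = (norm (0 - A *v Y x))\<^sup>2 - 2 * ((A *v Y x) \<bullet> (C *v W x))
      + (norm (0 - C *v W x))\<^sup>2 - (norm (0 - mat 1 *v W x))\<^sup>2 / \<alpha>" for x
    unfolding T_def CB_summand_decomposition A_def[symmetric] C_def[symmetric]
    by (simp add: power2_norm_eq_inner algebra_simps inner_commute)
  have lin_meas: "(\<lambda>v. K *v v) \<in> borel_measurable borel" for K :: "real^'n^'n"
    by (intro borel_measurable_continuous_onI linear_continuous_on matrix_vector_mul_bounded_linear)
  have indep_AC: "indep_var borel (\<lambda>x. A *v Y x) borel (\<lambda>x. C *v W x)"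
    using indep_var_compose[OF indep lin_meas lin_meas] by (simp add: comp_def)
  have Y_int: "integrable M Y" "expectation Y = \<theta>" and W_int: "integrable M W" "expectation W = 0"
    using Y W by (simp_all add: isotropic_moments_def)
  have AY_int: "integrable M (\<lambda>x. A *v Y x)" and CW_int: "integrable M (\<lambda>x. C *v W x)"
    using Y_int W_int by (auto intro: integrable_bounded_linear[OF matrix_vector_mul_bounded_linear])
  note cross = indep_var_integral_inner[OF indep_AC AY_int CW_int]
  have cross_zero: "expectation (\<lambda>x. (A *v Y x) \<bullet> (C *v W x)) = 0"
    using cross(2) W_int by (simp add: integral_bounded_linear[OF matrix_vector_mul_bounded_linear])
  note AY = expectation_power2_norm_affine[OF Y, of 0 A]
    and CW = expectation_power2_norm_affine[OF W, of 0 C]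
    and IW = expectation_power2_norm_affine[OF W, of 0 "mat 1"]
  show "integrable M T"
    unfolding T_split using AY(1) CW(1) IW(1) cross(1) by auto
  have "expectation T = (norm (A *v \<theta>))\<^sup>2 + s2 * ((norm A)\<^sup>2 + (norm C)\<^sup>2 - real CARD('n) / \<alpha>)"
    unfolding T_split using AY CW IW cross(1) cross_zero
    by (simp add: power2_norm_mat_1 algebra_simps diff_divide_distrib)
  also have "(norm A)\<^sup>2 + (norm C)\<^sup>2 = (1 + 1 / \<alpha>) * real CARD('n) + (1 + \<alpha>) * (norm S)\<^sup>2"
    unfolding A_def C_def weighted_parallelogram_law[OF \<open>\<alpha> > 0\<close>] power2_norm_mat_1 ..
  finally show "expectation T = (norm (\<theta> - S *v \<theta>))\<^sup>2 + (1 + \<alpha>) * s2 * (norm S)\<^sup>2 + real CARD('n) * s2"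
    using \<open>\<alpha> > 0\<close> by (simp add: A_def algebra_simps add_divide_distrib)
qed

lemma (in prob_space) expectation_average:
  assumes "B \<ge> 1" and "\<And>b. b < B \<Longrightarrow> integrable M (f b)" and "\<And>b. b < B \<Longrightarrow> expectation (f b) = K"
  shows "integrable M (\<lambda>x. (1 / real B) * (\<Sum>b<B. f b x))"
    and "expectation (\<lambda>x. (1 / real B) * (\<Sum>b<B. f b x)) = K"
proof -
  show "integrable M (\<lambda>x. (1 / real B) * (\<Sum>b<B. f b x))"
    using assms(2) by (intro Bochner_Integration.integrable_mult_right Bochner_Integration.integrable_sum) auto
  have "expectation (\<lambda>x. (1 / real B) * (\<Sum>b<B. f b x)) = (1 / real B) * (\<Sum>b<B. expectation (f b))"
    using assms(2) by (simp add: Bochner_Integration.integral_sum)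
  also have "\<dots> = K"
    using assms by simp
  finally show "expectation (\<lambda>x. (1 / real B) * (\<Sum>b<B. f b x)) = K" .
qed

lemma Basis_vec_eq_range_axis: "(Basis :: (real^'n) set) = range (\<lambda>i. axis i 1)"
  by (auto simp: Basis_vec_def)

lemma prod_Basis_vec: "(\<Prod>b\<in>(Basis :: (real^'n) set). h b) = (\<Prod>i\<in>UNIV. h (axis i 1))"
  unfolding Basis_vec_eq_range_axis by (subst prod.reindex) (auto simp: inj_def axis_eq_axis)

lemma lborel_integral_prod_vec_nth:
  fixes f :: "'n::finite \<Rightarrow> real \<Rightarrow> real"
  assumes f_int: "\<And>i. integrable lborel (f i)"
  shows "integrable lborel (\<lambda>x::real^'n. \<Prod>i\<in>UNIV. f i (x $ i))"
    and "(\<integral>x. (\<Prod>i\<in>UNIV. f i (x $ i)) \<partial>(lborel :: (real^'n) measure))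
         = (\<Prod>i\<in>UNIV. integral\<^sup>L lborel (f i))"
proof -
  interpret product_sigma_finite "\<lambda>_::real^'n. lborel :: real measure"
    by standard
  have [measurable]: "f i \<in> borel_measurable borel" for i
    using f_int by (simp add: borel_measurable_integrable)
  \<comment> \<open>By \<open>lborel_eq\<close>, Lebesgue measure on \<open>real^'n\<close> is the image of the product
    of one-dimensional Lebesgue measures over \<open>Basis\<close> under \<open>?T\<close>.\<close>
  let ?T = "\<lambda>g. \<Sum>b\<in>(Basis :: (real^'n) set). g b *\<^sub>R b"
  have T_meas: "?T \<in> measurable (\<Pi>\<^sub>M b\<in>Basis. lborel) borel"
    by measurable
  have F_meas: "(\<lambda>x::real^'n. \<Prod>i\<in>UNIV. f i (x $ i)) \<in> borel_measurable borel"
    by measurable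
  have T_nth: "(\<Sum>b\<in>(Basis :: (real^'n) set). g b * b $ i) = g (axis i 1)" for g i
  proof -
    have "(\<Sum>b\<in>(Basis :: (real^'n) set). g b * b $ i) = (\<Sum>j\<in>UNIV. g (axis j 1) * axis j 1 $ i)"
      unfolding Basis_vec_eq_range_axis by (subst sum.reindex) (auto simp: inj_def axis_eq_axis)
    also have "\<dots> = g (axis i 1)"
      by (simp add: axis_def if_distrib cong: if_cong)
    finally show ?thesis .
  qed
  have F_T: "(\<Prod>i\<in>UNIV. f i (\<Sum>b\<in>Basis. g b * b $ i)) = (\<Prod>b\<in>Basis. f (axis_index b) (g b))" for g
    by (simp add: prod_Basis_vec T_nth)
  have prod_int: "integrable (\<Pi>\<^sub>M b\<in>Basis. lborel) (\<lambda>g. \<Prod>b\<in>(Basis :: (real^'n) set). f (axis_index b) (g b))"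
    by (rule product_integrable_prod) (auto simp: f_int)
  show "integrable lborel (\<lambda>x::real^'n. \<Prod>i\<in>UNIV. f i (x $ i))"
    by (subst lborel_eq, subst integrable_distr_eq[OF T_meas F_meas]) (simp add: F_T prod_int)
  have "(\<integral>x. (\<Prod>i\<in>UNIV. f i (x $ i)) \<partial>(lborel :: (real^'n) measure))
      = (\<integral>g. (\<Prod>b\<in>(Basis :: (real^'n) set). f (axis_index b) (g b)) \<partial>(\<Pi>\<^sub>M b\<in>Basis. lborel))"
    by (subst lborel_eq, subst integral_distr[OF T_meas F_meas]) (simp add: F_T)
  also have "\<dots> = (\<Prod>b\<in>(Basis :: (real^'n) set). integral\<^sup>L lborel (f (axis_index b)))"
    by (rule product_integral_prod) (auto simp: f_int)
  also have "\<dots> = (\<Prod>i\<in>UNIV. integral\<^sup>L lborel (f i))"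
    by (simp add: prod_Basis_vec)
  finally show "(\<integral>x. (\<Prod>i\<in>UNIV. f i (x $ i)) \<partial>(lborel :: (real^'n) measure))
      = (\<Prod>i\<in>UNIV. integral\<^sup>L lborel (f i))" .
qed

lemma gauss_vec_central_moment:
  fixes mu :: "real^'n" and p :: "'n \<Rightarrow> nat"
  assumes "s2 > 0"
  shows "integrable (gauss_vec mu s2) (\<lambda>x. \<Prod>i\<in>UNIV. (x $ i - mu $ i) ^ p i)"
    and "(\<integral>x. (\<Prod>i\<in>UNIV. (x $ i - mu $ i) ^ p i) \<partial>gauss_vec mu s2)
         = (\<Prod>i\<in>UNIV. \<integral>t. normal_density (mu $ i) (sqrt s2) t * (t - mu $ i) ^ p i \<partial>lborel)"
proof -
  let ?d = "\<lambda>x::real^'n. \<Prod>i\<in>UNIV. normal_density (mu $ i) (sqrt s2) (x $ i)"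
  have d_meas: "?d \<in> borel_measurable lborel" and d_nonneg: "AE x in lborel. 0 \<le> ?d x"
    by (simp_all add: prod_nonneg)
  have moment_meas: "(\<lambda>x::real^'n. \<Prod>i\<in>UNIV. (x $ i - mu $ i) ^ p i) \<in> borel_measurable lborel"
    by measurable
  have weighted: "?d x *\<^sub>R (\<Prod>i\<in>UNIV. (x $ i - mu $ i) ^ p i)
      = (\<Prod>i\<in>UNIV. normal_density (mu $ i) (sqrt s2) (x $ i) * (x $ i - mu $ i) ^ p i)" for x
    by (simp add: prod.distrib)
  note product = lborel_integral_prod_vec_nth[where f="\<lambda>i t. normal_density (mu $ i) (sqrt s2) t * (t - mu $ i) ^ p i"]
  have normal_int: "integrable lborel (\<lambda>t. normal_density (mu $ i) (sqrt s2) t * (t - mu $ i) ^ p i)" for i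
    using \<open>s2 > 0\<close> by (simp add: integrable_normal_moment)
  show "integrable (gauss_vec mu s2) (\<lambda>x. \<Prod>i\<in>UNIV. (x $ i - mu $ i) ^ p i)"
    unfolding gauss_vec_def integrable_density[OF moment_meas d_meas d_nonneg] weighted
    using product(1)[OF normal_int] .
  show "(\<integral>x. (\<Prod>i\<in>UNIV. (x $ i - mu $ i) ^ p i) \<partial>gauss_vec mu s2)
         = (\<Prod>i\<in>UNIV. \<integral>t. normal_density (mu $ i) (sqrt s2) t * (t - mu $ i) ^ p i \<partial>lborel)"
    unfolding gauss_vec_def integral_density[OF moment_meas d_meas d_nonneg] weighted
    using product(2)[OF normal_int] .
qed

lemma integral_normal_central_moment_0_1_2:
  assumes "s2 > 0"
  shows "(\<integral>t. normal_density m (sqrt s2) t * (t - m) ^ 0 \<partial>lborel) = 1"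
    and "(\<integral>t. normal_density m (sqrt s2) t * (t - m) ^ 1 \<partial>lborel) = 0"
    and "(\<integral>t. normal_density m (sqrt s2) t * (t - m) ^ 2 \<partial>lborel) = s2"
  using assms integral_normal_moment_odd[of "sqrt s2" m 0] integral_normal_moment_even[of "sqrt s2" m 1]
  by simp_all

lemma prob_space_gauss_vec:
  assumes "s2 > 0"
  shows "prob_space (gauss_vec mu s2)"
proof
  note moment_0 = gauss_vec_central_moment[OF assms, where mu=mu and p="\<lambda>_. 0"]
  have "integrable (gauss_vec mu s2) (\<lambda>_. 1::real)" and "measure (gauss_vec mu s2) (space (gauss_vec mu s2)) = 1"
    using moment_0 by (simp_all add: integral_normal_central_moment_0_1_2[OF assms, simplified])
  then show "emeasure (gauss_vec mu s2) (space (gauss_vec mu s2)) = 1"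
    by (simp add: emeasure_eq_ennreal_measure integrable_indicator_iff[of _ UNIV, simplified]
        gauss_vec_def)
qed

lemma prod_power_of_bool_eq:
  fixes a :: "'n::finite \<Rightarrow> 'b::comm_monoid_mult"
  shows "(\<Prod>i\<in>UNIV. a i ^ of_bool (i = j)) = a j"
  by (simp add: of_bool_def if_distrib cong: if_cong)

lemma isotropic_moments_gauss_vec:
  fixes mu :: "real^'n"
  assumes "s2 > 0"
  shows "isotropic_moments (gauss_vec mu s2) (\<lambda>x. x) mu s2"
proof -
  let ?G = "gauss_vec mu s2"
  interpret prob_space ?G
    using prob_space_gauss_vec[OF assms] .
  define c where "c i n = (\<integral>t. normal_density (mu $ i) (sqrt s2) t * (t - mu $ i) ^ n \<partial>lborel)" for i n
  have c_0: "c i 0 = 1" and c_1: "c i 1 = 0" and c_2: "c i 2 = s2" for i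
    unfolding c_def using integral_normal_central_moment_0_1_2[OF assms] by simp_all
  note moment = gauss_vec_central_moment[OF assms, where mu=mu, folded c_def]
  have coord: "integrable ?G (\<lambda>x. x $ j - mu $ j)" "(\<integral>x. x $ j - mu $ j \<partial>?G) = 0" for j
  proof -
    have "(\<Prod>i\<in>UNIV. c i (of_bool (i = j))) = 0"
      using c_1[of j] by (intro prod_zero bexI[of _ j]) auto
    then show "integrable ?G (\<lambda>x. x $ j - mu $ j)" "(\<integral>x. x $ j - mu $ j \<partial>?G) = 0"
      using moment[where p="\<lambda>i. of_bool (i = j)"] by (simp_all add: prod_power_of_bool_eq)
  qed
  have cov: "integrable ?G (\<lambda>x. (x $ j - mu $ j) * (x $ k - mu $ k))"
    "(\<integral>x. (x $ j - mu $ j) * (x $ k - mu $ k) \<partial>?G) = (if j = k then s2 else 0)" for j k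
  proof -
    let ?p = "\<lambda>i. of_bool (i = j) + of_bool (i = k)"
    have pointwise: "(\<Prod>i\<in>UNIV. (x $ i - mu $ i) ^ ?p i) = (x $ j - mu $ j) * (x $ k - mu $ k)" for x
      by (simp only: power_add prod.distrib prod_power_of_bool_eq)
    have "(\<Prod>i\<in>UNIV. c i (?p i)) = (if j = k then s2 else 0)"
    proof (cases "j = k")
      case True
      then have "(\<Prod>i\<in>UNIV. c i (?p i)) = (\<Prod>i\<in>UNIV. if i = j then s2 else 1)"
        by (intro prod.cong) (auto simp: c_0 c_2[unfolded numeral_2_eq_2])
      then show ?thesis
        using True by simp
    next
      case False
      have "(\<Prod>i\<in>UNIV. c i (?p i)) = 0"
        using False c_1[of j] by (intro prod_zero bexI[of _ j]) auto
      then show ?thesis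
        using False by simp
    qed
    then show "integrable ?G (\<lambda>x. (x $ j - mu $ j) * (x $ k - mu $ k))"
      "(\<integral>x. (x $ j - mu $ j) * (x $ k - mu $ k) \<partial>?G) = (if j = k then s2 else 0)"
      using moment[where p="?p"] by (simp_all only: pointwise)
  qed
  have nth_int: "integrable ?G (\<lambda>x. x $ j)" for j
    using Bochner_Integration.integrable_add[OF coord(1)[of j] integrable_const[of "mu $ j"]] by simp
  have nth_mean: "(\<integral>x. x $ j \<partial>?G) = mu $ j" for j
    using coord(2)[of j] nth_int[of j] by (simp add: prob_space)
  have id_int: "integrable ?G (\<lambda>x. x)"
    using nth_int by (simp add: integrable_vec_nth_iff)
  have "(\<integral>x. x \<partial>?G) = mu"
    using id_int nth_mean by (simp add: vec_eq_iff integral_vec_nth[symmetric])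
  then show ?thesis
    unfolding isotropic_moments_def using id_int cov by simp
qed

theorem mainTheorem3:
  fixes M :: "'a measure"
    and Y :: "'a \<Rightarrow> real^'n"
    and \<omega> :: "nat \<Rightarrow> 'a \<Rightarrow> real^'n"
    and \<theta> :: "real^'n"
    and S :: "real^'n^'n"
    and \<sigma> \<alpha> :: real
    and B :: nat
  assumes "prob_space M"
    and "\<sigma> > 0" and "\<alpha> > 0" and "B \<ge> 1"
    and Y_meas: "Y \<in> borel_measurable M"
    and Y_mean: "integrable M Y" "prob_space.expectation M Y = \<theta>"
    and Y_cov: "\<And>i j. integrable M (\<lambda>x. (Y x $ i - \<theta> $ i) * (Y x $ j - \<theta> $ j))"
      "\<And>i j. prob_space.expectation M (\<lambda>x. (Y x $ i - \<theta> $ i) * (Y x $ j - \<theta> $ j))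
              = (if i = j then \<sigma>\<^sup>2 else 0)"
    and \<omega>_meas: "\<And>b. b < B \<Longrightarrow> \<omega> b \<in> borel_measurable M"
    and \<omega>_gauss: "\<And>b. b < B \<Longrightarrow> distr M lborel (\<omega> b) = gauss_vec 0 (\<sigma>\<^sup>2)"
    and indep: "prob_space.indep_vars M (\<lambda>_. borel)
                  (\<lambda>k. case k of None \<Rightarrow> Y | Some b \<Rightarrow> \<omega> b)
                  (insert None (Some ` {..<B}))"
  shows "prob_space.expectation M (\<lambda>x. CB \<alpha> B \<sigma> S (Y x) (\<lambda>b. \<omega> b x))
         = (\<integral>z. (norm (\<theta> - S *v z))\<^sup>2 \<partial>(gauss_vec \<theta> ((1 + \<alpha>) * \<sigma>\<^sup>2)))"
proof -
  interpret prob_space M by fact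
  have "\<sigma>\<^sup>2 > 0" and "(1 + \<alpha>) * \<sigma>\<^sup>2 > 0"
    using \<open>\<sigma> > 0\<close> \<open>\<alpha> > 0\<close> by simp_all
  have Y_iso: "isotropic_moments M Y \<theta> (\<sigma>\<^sup>2)"
    using Y_mean Y_cov by (simp add: isotropic_moments_def)
  have \<omega>_iso: "isotropic_moments M (\<omega> b) 0 (\<sigma>\<^sup>2)" if "b < B" for b
    using isotropic_moments_gauss_vec[OF \<open>\<sigma>\<^sup>2 > 0\<close>, of 0]
    by (intro isotropic_moments_distr[OF \<omega>_meas[OF that]]) (simp add: \<omega>_gauss[OF that])
  have Y_\<omega>_indep: "indep_var borel Y borel (\<omega> b)" if "b < B" for b
    using indep_var_of_indep_vars[OF indep, of None "Some b"] that by simp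
  define R where "R = (norm (\<theta> - S *v \<theta>))\<^sup>2 + (1 + \<alpha>) * \<sigma>\<^sup>2 * (norm S)\<^sup>2"
  define T where "T b x = (norm ((Y x - (1 / sqrt \<alpha>) *\<^sub>R \<omega> b x) - S *v (Y x + sqrt \<alpha> *\<^sub>R \<omega> b x)))\<^sup>2
      - (norm (\<omega> b x))\<^sup>2 / \<alpha>" for b x
  note summand = expectation_CB_summand[OF Y_iso \<omega>_iso Y_\<omega>_indep \<open>\<alpha> > 0\<close>, where S=S, folded T_def R_def]
  note average = expectation_average[OF \<open>B \<ge> 1\<close> summand]
  have "CB \<alpha> B \<sigma> S (Y x) (\<lambda>b. \<omega> b x) = (1 / real B) * (\<Sum>b<B. T b x) - real CARD('n) * \<sigma>\<^sup>2" for x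
    by (simp add: CB_def T_def)
  then have "expectation (\<lambda>x. CB \<alpha> B \<sigma> S (Y x) (\<lambda>b. \<omega> b x)) = R"
    using average by (simp add: prob_space)
  also have "\<dots> = (\<integral>z. (norm (\<theta> - S *v z))\<^sup>2 \<partial>(gauss_vec \<theta> ((1 + \<alpha>) * \<sigma>\<^sup>2)))"
    unfolding R_def
    by (rule prob_space.expectation_power2_norm_affine(2)[OF prob_space_gauss_vec
          isotropic_moments_gauss_vec, symmetric]) (use \<open>(1 + \<alpha>) * \<sigma>\<^sup>2 > 0\<close> in simp_all)
  finally show ?thesis .
qed

end
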